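(* Let \(\mathcal G\) be an étale topological groupoid whose object space \(\mathcal G^{(0)}\) is sober, and let \(S=\mathrm{Bis}(\mathcal G)\) with idempotent part \(E\subseteq S\). Call \(e\in E\) irreducible if \(e\neq1\) and \(e=e_1e_2\) with \(e_1,e_2\in E\) implies \(e_1=e\) or \(e_2=e\). For irreducible \(e\in E\), define \(\varphi_e\colon E\to\{0,1\}\) by \(\varphi_e(f)=0\) if and only if \(f\le e\). Then each \(\varphi_e\) is a character on \(E\), and the set \(X\subseteq\hat E\) of all \(\varphi_e\) with \(e\) irreducible is \(S\)-invariant. Moreover, the restriction of \(\mathcal G(S)\) to \(X\) is naturally isomorphic to \(\mathcal G\).
   Context: A topological space is sober if every non-empty irreducible closed subset is the closure of a unique point. A closed set \(A\) is irreducible if \(A=A_1\cup A_2\) with \(A_i\) closed implies \(A_1=A\) or \(A_2=A\). A bisection of a topological groupoid is an open subset of the arrow space on which range and source maps are injective and open. A groupoid is étale if bisections cover its arrow space. \(\mathrm{Bis}(\mathcal G)\) is the inverse semigroup of bisections with \(st=\{gh:g\in s,h\in t\}\) and \(s^*=\{g^{-1}:g\in s\}\), unit \(1=\mathcal G^{(0)}\) and zero \(\emptyset\). Its idempotents are exactly the open subsets of \(\mathcal G^{(0)}\), with product \(\cap\) and order \(\subseteq\). For an inverse semigroup \(S\) with idempotents \(E\): a character is a map \(\varphi\colon E\to\{0,1\}\) with \(\varphi(0)=0\), \(\varphi(1)=1\), \(\varphi(ef)=\varphi(e)\varphi(f)\). \(\hat E\) is the set of characters with the topology generated by \(U_e=\{\varphi:\varphi(e)=1\}\).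 \(S\) acts on \(\hat E\) by \(s\cdot\varphi(e)=\varphi(s^*es)\) for \(\varphi\in U_{s^*s}\). \(\mathcal G(S)\) is the germ groupoid of this action. Objects are \(\hat E\). Arrows are classes \([s,\varphi]\) with \(s\in S\), \(\varphi\in U_{s^*s}\), where \((s,\varphi)\sim(t,\psi)\) iff \(\varphi=\psi\) and \(se=te\) for some \(e\in E\) with \(\varphi(e)=1\). The structure maps are \(\mathrm s[s,\varphi]=\varphi\), \(\mathrm r[s,\varphi]=s\cdot\varphi\), \([s,t\cdot\psi][t,\psi]=[st,\psi]\), with the topology generated by the sets \(\{[s,\varphi]:\varphi\in U\}\) for \(U\subseteq U_{s^*s}\) open. The restriction of a groupoid to an invariant subset \(X\) of objects is the subgroupoid of arrows with source (equivalently range) in \(X\). *)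

theory Defs
  imports "HOL-Analysis.Analysis"
begin

definition irreducible_closed_in :: "'a topology \<Rightarrow> 'a set \<Rightarrow> bool" where
  "irreducible_closed_in T A \<longleftrightarrow> closedin T A \<and>
     (\<forall>A1 A2. closedin T A1 \<and> closedin T A2 \<and> A = A1 \<union> A2 \<longrightarrow> A1 = A \<or> A2 = A)"

definition sober :: "'a topology \<Rightarrow> bool" where
  "sober T \<longleftrightarrow> (\<forall>A. A \<noteq> {} \<and> irreducible_closed_in T A \<longrightarrow>
      (\<exists>!x. x \<in> topspace T \<and> A = T closure_of {x}))"

text \<open>Objects are the points of obj_top, arrows the points of arr_top.
  comp g h is the composite gh, defined when src g = rng h.\<close>

record ('o, 'a) tgpd =
  obj_top :: "'o topology"
  arr_top :: "'a topology"
  src :: "'a \<Rightarrow> 'o"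
  rng :: "'a \<Rightarrow> 'o"
  comp :: "'a \<Rightarrow> 'a \<Rightarrow> 'a"
  ginv :: "'a \<Rightarrow> 'a"
  ident :: "'o \<Rightarrow> 'a"

abbreviation objs :: "('o, 'a) tgpd \<Rightarrow> 'o set" where
  "objs G \<equiv> topspace (obj_top G)"

abbreviation arrs :: "('o, 'a) tgpd \<Rightarrow> 'a set" where
  "arrs G \<equiv> topspace (arr_top G)"

definition composable :: "('o, 'a) tgpd \<Rightarrow> ('a \<times> 'a) set" where
  "composable G = {(g, h). g \<in> arrs G \<and> h \<in> arrs G \<and> src G g = rng G h}"

definition topological_groupoid :: "('o, 'a) tgpd \<Rightarrow> bool" where
  "topological_groupoid G \<longleftrightarrow>
     (\<forall>g\<in>arrs G. src G g \<in> objs G \<and> rng G g \<in> objs G \<and> ginv G g \<in> arrs G) \<and>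
     (\<forall>x\<in>objs G. ident G x \<in> arrs G \<and> src G (ident G x) = x \<and> rng G (ident G x) = x) \<and>
     (\<forall>(g, h)\<in>composable G. comp G g h \<in> arrs G \<and>
         src G (comp G g h) = src G h \<and> rng G (comp G g h) = rng G g) \<and>
     (\<forall>g\<in>arrs G. \<forall>h\<in>arrs G. \<forall>k\<in>arrs G. src G g = rng G h \<longrightarrow> src G h = rng G k \<longrightarrow>
         comp G (comp G g h) k = comp G g (comp G h k)) \<and>
     (\<forall>g\<in>arrs G. comp G (ident G (rng G g)) g = g \<and> comp G g (ident G (src G g)) = g) \<and>
     (\<forall>g\<in>arrs G. src G (ginv G g) = rng G g \<and> rng G (ginv G g) = src G g \<and>
         comp G g (ginv G g) = ident G (rng G g) \<and> comp G (ginv G g) g = ident G (src G g)) \<and>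
     continuous_map (arr_top G) (obj_top G) (src G) \<and>
     continuous_map (arr_top G) (obj_top G) (rng G) \<and>
     continuous_map (arr_top G) (arr_top G) (ginv G) \<and>
     continuous_map (obj_top G) (arr_top G) (ident G) \<and>
     continuous_map (subtopology (prod_topology (arr_top G) (arr_top G)) (composable G))
        (arr_top G) (\<lambda>(g, h). comp G g h)"

definition bisection :: "('o, 'a) tgpd \<Rightarrow> 'a set \<Rightarrow> bool" where
  "bisection G B \<longleftrightarrow> openin (arr_top G) B \<and>
     inj_on (src G) B \<and> inj_on (rng G) B \<and>
     open_map (subtopology (arr_top G) B) (obj_top G) (src G) \<and>
     open_map (subtopology (arr_top G) B) (obj_top G) (rng G)"

definition etale :: "('o, 'a) tgpd \<Rightarrow> bool" where
  "etale G \<longleftrightarrow> topological_groupoid G \<and>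
     arrs G \<subseteq> \<Union>{B. bisection G B}"

definition Bis :: "('o, 'a) tgpd \<Rightarrow> 'a set set" where
  "Bis G = {B. bisection G B}"

definition bis_mult :: "('o, 'a) tgpd \<Rightarrow> 'a set \<Rightarrow> 'a set \<Rightarrow> 'a set" where
  "bis_mult G s t = {comp G g h | g h. g \<in> s \<and> h \<in> t \<and> src G g = rng G h}"

definition bis_star :: "('o, 'a) tgpd \<Rightarrow> 'a set \<Rightarrow> 'a set" where
  "bis_star G s = ginv G ` s"

definition bis_one :: "('o, 'a) tgpd \<Rightarrow> 'a set" where
  "bis_one G = ident G ` objs G"

definition bis_zero :: "'a set" where
  "bis_zero = {}"

definition idems :: "'s set \<Rightarrow> ('s \<Rightarrow> 's \<Rightarrow> 's) \<Rightarrow> 's set" where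
  "idems S mul = {e \<in> S. mul e e = e}"

text \<open>Characters E \<rightarrow> {0,1} as boolean functions, normalised to False outside E.\<close>
definition characters :: "'s set \<Rightarrow> ('s \<Rightarrow> 's \<Rightarrow> 's) \<Rightarrow> 's \<Rightarrow> 's \<Rightarrow> ('s \<Rightarrow> bool) set" where
  "characters S mul one zero =
     {\<phi>. (\<forall>x. x \<notin> idems S mul \<longrightarrow> \<not> \<phi> x) \<and> \<not> \<phi> zero \<and> \<phi> one \<and>
          (\<forall>e\<in>idems S mul. \<forall>f\<in>idems S mul. \<phi> (mul e f) = (\<phi> e \<and> \<phi> f))}"

definition charU :: "'s set \<Rightarrow> ('s \<Rightarrow> 's \<Rightarrow> 's) \<Rightarrow> 's \<Rightarrow> 's \<Rightarrow> 's \<Rightarrow> ('s \<Rightarrow> bool) set" where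
  "charU S mul one zero e = {\<phi> \<in> characters S mul one zero. \<phi> e}"

definition char_top :: "'s set \<Rightarrow> ('s \<Rightarrow> 's \<Rightarrow> 's) \<Rightarrow> 's \<Rightarrow> 's \<Rightarrow> ('s \<Rightarrow> bool) topology" where
  "char_top S mul one zero =
     topology_generated_by {charU S mul one zero e | e. e \<in> idems S mul}"

definition char_act :: "'s set \<Rightarrow> ('s \<Rightarrow> 's \<Rightarrow> 's) \<Rightarrow> ('s \<Rightarrow> 's) \<Rightarrow> 's \<Rightarrow> ('s \<Rightarrow> bool) \<Rightarrow> ('s \<Rightarrow> bool)" where
  "char_act S mul star s \<phi> = (\<lambda>e. e \<in> idems S mul \<and> \<phi> (mul (mul (star s) e) s))"

definition germ_pairs :: "'s set \<Rightarrow> ('s \<Rightarrow> 's \<Rightarrow> 's) \<Rightarrow> ('s \<Rightarrow> 's) \<Rightarrow> 's \<Rightarrow> 's \<Rightarrow> ('s \<times> ('s \<Rightarrow> bool)) set" where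
  "germ_pairs S mul star one zero =
     {(s, \<phi>). s \<in> S \<and> \<phi> \<in> charU S mul one zero (mul (star s) s)}"

definition germ_rel :: "'s set \<Rightarrow> ('s \<Rightarrow> 's \<Rightarrow> 's) \<Rightarrow> ('s \<Rightarrow> 's) \<Rightarrow> 's \<Rightarrow> 's \<Rightarrow>
     (('s \<times> ('s \<Rightarrow> bool)) \<times> ('s \<times> ('s \<Rightarrow> bool))) set" where
  "germ_rel S mul star one zero =
     {((s, \<phi>), (t, \<psi>)). (s, \<phi>) \<in> germ_pairs S mul star one zero \<and>
        (t, \<psi>) \<in> germ_pairs S mul star one zero \<and> \<phi> = \<psi> \<and>
        (\<exists>e\<in>idems S mul. \<phi> e \<and> mul s e = mul t e)}"

definition germ :: "'s set \<Rightarrow> ('s \<Rightarrow> 's \<Rightarrow> 's) \<Rightarrow> ('s \<Rightarrow> 's) \<Rightarrow> 's \<Rightarrow> 's \<Rightarrow>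
     's \<Rightarrow> ('s \<Rightarrow> bool) \<Rightarrow> ('s \<times> ('s \<Rightarrow> bool)) set" where
  "germ S mul star one zero s \<phi> = germ_rel S mul star one zero `` {(s, \<phi>)}"

definition germ_groupoid :: "'s set \<Rightarrow> ('s \<Rightarrow> 's \<Rightarrow> 's) \<Rightarrow> ('s \<Rightarrow> 's) \<Rightarrow> 's \<Rightarrow> 's \<Rightarrow>
     ('s \<Rightarrow> bool, ('s \<times> ('s \<Rightarrow> bool)) set) tgpd" where
  "germ_groupoid S mul star one zero =
    (let gm = germ S mul star one zero;
         act = char_act S mul star;
         rep = (\<lambda>A. SOME p. p \<in> A)
     in \<lparr> obj_top = char_top S mul one zero,
        arr_top = topology_generated_by
           {{gm s \<phi> | \<phi>. \<phi> \<in> U} | s U. s \<in> S \<and>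
               openin (char_top S mul one zero) U \<and> U \<subseteq> charU S mul one zero (mul (star s) s)},
        src = (\<lambda>A. snd (rep A)),
        rng = (\<lambda>A. act (fst (rep A)) (snd (rep A))),
        comp = (\<lambda>A B. gm (mul (fst (rep A)) (fst (rep B))) (snd (rep B))),
        ginv = (\<lambda>A. gm (star (fst (rep A))) (act (fst (rep A)) (snd (rep A)))),
        ident = (\<lambda>\<phi>. gm one \<phi>) \<rparr>)"

definition restrict_gpd :: "('o, 'a) tgpd \<Rightarrow> 'o set \<Rightarrow> ('o, 'a) tgpd" where
  "restrict_gpd G X = G\<lparr> obj_top := subtopology (obj_top G) X,
       arr_top := subtopology (arr_top G) {g \<in> arrs G. src G g \<in> X} \<rparr>"

definition gpd_iso :: "('o1, 'a1) tgpd \<Rightarrow> ('o2, 'a2) tgpd \<Rightarrow> bool" where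
  "gpd_iso G H \<longleftrightarrow> (\<exists>fo fa.
     homeomorphic_map (obj_top G) (obj_top H) fo \<and>
     homeomorphic_map (arr_top G) (arr_top H) fa \<and>
     (\<forall>g\<in>arrs G. src H (fa g) = fo (src G g) \<and> rng H (fa g) = fo (rng G g) \<and>
                  ginv H (fa g) = fa (ginv G g)) \<and>
     (\<forall>x\<in>objs G. ident H (fo x) = fa (ident G x)) \<and>
     (\<forall>(g, h)\<in>composable G. comp H (fa g) (fa h) = fa (comp G g h)))"

abbreviation BisE :: "('o, 'a) tgpd \<Rightarrow> 'a set set" where
  "BisE G \<equiv> idems (Bis G) (bis_mult G)"

definition irreducible_idem :: "('o, 'a) tgpd \<Rightarrow> 'a set \<Rightarrow> bool" where
  "irreducible_idem G e \<longleftrightarrow> e \<in> BisE G \<and> e \<noteq> bis_one G \<and>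
     (\<forall>e1\<in>BisE G. \<forall>e2\<in>BisE G. e = bis_mult G e1 e2 \<longrightarrow> e1 = e \<or> e2 = e)"

text \<open>\<phi>_e(f) = 0 iff f \<le> e (for f \<in> E; normalised to False outside E).\<close>
definition phi_irr :: "('o, 'a) tgpd \<Rightarrow> 'a set \<Rightarrow> 'a set \<Rightarrow> bool" where
  "phi_irr G e = (\<lambda>f. f \<in> BisE G \<and> \<not> f \<subseteq> e)"

definition S_invariant :: "'s set \<Rightarrow> ('s \<Rightarrow> 's \<Rightarrow> 's) \<Rightarrow> ('s \<Rightarrow> 's) \<Rightarrow> 's \<Rightarrow> 's \<Rightarrow>
     ('s \<Rightarrow> bool) set \<Rightarrow> bool" where
  "S_invariant S mul star one zero X \<longleftrightarrow>
     (\<forall>s\<in>S. \<forall>\<phi>\<in>X. \<phi> \<in> charU S mul one zero (mul (star s) s) \<longrightarrow> char_act S mul star s \<phi> \<in> X)"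

end

theory Submission
  imports Defs
begin

text \<open>The idempotents of Bis(G) are the bisections ident ` W with W open in the object space, and
  they multiply by intersecting the W. So irreducible idempotents correspond to meet-irreducible
  open sets, which in a sober space are the complements of point closures, and phi_e is the
  evaluation character ident ` W \<mapsto> [x \<in> W] of the point x. A bisection s moves the character of
  x to the character of rng g, for g the arrow of s with source x, and the germ [s, phi_x] remembers
  exactly g. Sending each arrow to its germ is therefore a bijection onto the restricted germ
  groupoid; it respects the structure maps and matches the basic open sets of germs with open
  subsets of bisections. Sobriety is used twice: to realise every irreducible idempotent by a point,
  and, through the T0 property, to recover points from their characters.\<close>

lemma irreducible_closed_in_closure_of_singleton:
  assumes "x \<in> topspace T"
  shows "irreducible_closed_in T (T closure_of {x})"
  unfolding irreducible_closed_in_def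
proof (intro conjI allI impI)
  fix A1 A2 assume A: "closedin T A1 \<and> closedin T A2 \<and> T closure_of {x} = A1 \<union> A2"
  then have "x \<in> A1 \<or> x \<in> A2"
    using assms closure_of_subset[of "{x}" T] by blast
  then show "A1 = T closure_of {x} \<or> A2 = T closure_of {x}"
    using A closure_of_minimal[of "{x}" _ T] by blast
qed simp

lemma sober_imp_t0_space:
  assumes "sober T"
  shows "t0_space T"
  unfolding t0_space_closure_of_sing
proof (intro ballI impI)
  fix x y assume x: "x \<in> topspace T" and y: "y \<in> topspace T"
    and eq: "T closure_of {x} = T closure_of {y}"
  have "T closure_of {x} \<noteq> {}" using x closure_of_subset[of "{x}" T] by blast
  then have "\<exists>!z. z \<in> topspace T \<and> T closure_of {x} = T closure_of {z}"
    using assms irreducible_closed_in_closure_of_singleton[OF x] unfolding sober_def by blast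
  then show "x = y" using x y eq by blast
qed

lemma subset_compl_closure_of_singleton_iff:
  assumes "openin T W" "x \<in> topspace T"
  shows "W \<subseteq> topspace T - T closure_of {x} \<longleftrightarrow> x \<notin> W"
proof
  assume "W \<subseteq> topspace T - T closure_of {x}"
  then show "x \<notin> W" using assms(2) closure_of_subset[of "{x}" T] by blast
next
  assume "x \<notin> W"
  then have "T closure_of {x} \<subseteq> topspace T - W"
    using assms by (intro closure_of_minimal) (auto simp: closedin_diff)
  then show "W \<subseteq> topspace T - T closure_of {x}" using assms(1) openin_subset by blast
qed

definition meet_irreducible_open :: "'a topology \<Rightarrow> 'a set \<Rightarrow> bool" where
  "meet_irreducible_open T V \<longleftrightarrow> openin T V \<and> V \<noteq> topspace T \<and>
     (\<forall>V1 V2. openin T V1 \<and> openin T V2 \<and> V = V1 \<inter> V2 \<longrightarrow> V1 = V \<or> V2 = V)"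

lemma meet_irreducible_open_compl_closure_of_singleton:
  assumes x: "x \<in> topspace T"
  shows "meet_irreducible_open T (topspace T - T closure_of {x})"
  unfolding meet_irreducible_open_def
proof (intro conjI allI impI)
  show "topspace T - T closure_of {x} \<noteq> topspace T"
    using x closure_of_subset[of "{x}" T] by blast
  fix V1 V2 assume V: "openin T V1 \<and> openin T V2 \<and> topspace T - T closure_of {x} = V1 \<inter> V2"
  then have "x \<notin> V1 \<or> x \<notin> V2" using x closure_of_subset[of "{x}" T] by blast
  moreover have "V1 \<subseteq> topspace T - T closure_of {x}" if "x \<notin> V1"
    using V that subset_compl_closure_of_singleton_iff[OF _ x] by blast
  moreover have "V2 \<subseteq> topspace T - T closure_of {x}" if "x \<notin> V2"
    using V that subset_compl_closure_of_singleton_iff[OF _ x] by blast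
  ultimately show "V1 = topspace T - T closure_of {x} \<or> V2 = topspace T - T closure_of {x}"
    using V by blast
qed (simp add: openin_diff)

lemma sober_meet_irreducible_open_iff:
  assumes "sober T"
  shows "meet_irreducible_open T V \<longleftrightarrow> (\<exists>x\<in>topspace T. V = topspace T - T closure_of {x})"
proof
  assume V: "meet_irreducible_open T V"
  define C where "C = topspace T - V"
  have open_V: "openin T V" and "V \<noteq> topspace T"
    using V unfolding meet_irreducible_open_def by auto
  then have "C \<noteq> {}" using openin_subset unfolding C_def by blast
  moreover have "irreducible_closed_in T C"
    unfolding irreducible_closed_in_def
  proof (intro conjI allI impI)
    show "closedin T C" unfolding C_def using open_V by (simp add: closedin_diff)
    fix C1 C2 assume C12: "closedin T C1 \<and> closedin T C2 \<and> C = C1 \<union> C2"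
    then have "V = (topspace T - C1) \<inter> (topspace T - C2)"
      using open_V openin_subset closedin_subset unfolding C_def by blast
    moreover have "openin T (topspace T - C1)" "openin T (topspace T - C2)"
      using C12 by (auto simp: openin_diff)
    ultimately have "topspace T - C1 = V \<or> topspace T - C2 = V"
      using V unfolding meet_irreducible_open_def by blast
    then show "C1 = C \<or> C2 = C" using C12 closedin_subset unfolding C_def by blast
  qed
  ultimately obtain x where "x \<in> topspace T" "C = T closure_of {x}"
    using assms unfolding sober_def by blast
  then show "\<exists>x\<in>topspace T. V = topspace T - T closure_of {x}"
    using open_V openin_subset unfolding C_def by blast
qed (metis meet_irreducible_open_compl_closure_of_singleton)

lemma homeomorphic_map_inv_into:
  assumes "homeomorphic_map X Y f"
  shows "homeomorphic_map Y X (inv_into (topspace X) f)"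
proof -
  obtain g where fg: "homeomorphic_maps X Y f g"
    using assms homeomorphic_map_maps by blast
  have inj: "inj_on f (topspace X)" using assms homeomorphic_imp_injective_map by blast
  have "inv_into (topspace X) f y = g y" if "y \<in> topspace Y" for y
  proof (rule inv_into_f_eq[OF inj])
    show "g y \<in> topspace X" "f (g y) = y"
      using fg that unfolding homeomorphic_maps_def continuous_map_def by auto
  qed
  then have "homeomorphic_maps Y X (inv_into (topspace X) f) f"
    using fg homeomorphic_maps_eq homeomorphic_maps_sym by metis
  then show ?thesis
    using homeomorphic_maps_map by blast
qed

lemma mem_germ_snd: "(t, \<psi>) \<in> germ S mul star one zero s \<phi> \<Longrightarrow> \<psi> = \<phi>"
  unfolding germ_def germ_rel_def by blast

lemma restrict_gpd_simps:
  "obj_top (restrict_gpd H X) = subtopology (obj_top H) X"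
  "arr_top (restrict_gpd H X) = subtopology (arr_top H) {g \<in> arrs H. src H g \<in> X}"
  "src (restrict_gpd H X) = src H" "rng (restrict_gpd H X) = rng H"
  "comp (restrict_gpd H X) = comp H" "ginv (restrict_gpd H X) = ginv H"
  "ident (restrict_gpd H X) = ident H"
  by (simp_all add: restrict_gpd_def)

section \<open>Bisections of an etale groupoid\<close>

locale etale_groupoid =
  fixes G :: "('o, 'a) tgpd"
  assumes etale: "etale G"
begin

lemma topological_groupoid: "topological_groupoid G"
  using etale unfolding etale_def by blast

lemmas groupoid_laws = topological_groupoid[unfolded topological_groupoid_def composable_def]

lemma src_in_objs: "g \<in> arrs G \<Longrightarrow> src G g \<in> objs G"
  using groupoid_laws by blast
lemma rng_in_objs: "g \<in> arrs G \<Longrightarrow> rng G g \<in> objs G"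
  using groupoid_laws by blast
lemma ginv_in_arrs: "g \<in> arrs G \<Longrightarrow> ginv G g \<in> arrs G"
  using groupoid_laws by blast
lemma ident_in_arrs: "x \<in> objs G \<Longrightarrow> ident G x \<in> arrs G"
  using groupoid_laws by blast
lemma src_ident [simp]: "x \<in> objs G \<Longrightarrow> src G (ident G x) = x"
  using groupoid_laws by blast
lemma rng_ident [simp]: "x \<in> objs G \<Longrightarrow> rng G (ident G x) = x"
  using groupoid_laws by blast
lemma comp_in_arrs: "g \<in> arrs G \<Longrightarrow> h \<in> arrs G \<Longrightarrow> src G g = rng G h \<Longrightarrow> comp G g h \<in> arrs G"
  using groupoid_laws by blast
lemma src_comp [simp]:
  "g \<in> arrs G \<Longrightarrow> h \<in> arrs G \<Longrightarrow> src G g = rng G h \<Longrightarrow> src G (comp G g h) = src G h"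
  using groupoid_laws by blast
lemma rng_comp [simp]:
  "g \<in> arrs G \<Longrightarrow> h \<in> arrs G \<Longrightarrow> src G g = rng G h \<Longrightarrow> rng G (comp G g h) = rng G g"
  using groupoid_laws by blast
lemma comp_assoc:
  "g \<in> arrs G \<Longrightarrow> h \<in> arrs G \<Longrightarrow> k \<in> arrs G \<Longrightarrow> src G g = rng G h \<Longrightarrow> src G h = rng G k \<Longrightarrow>
   comp G (comp G g h) k = comp G g (comp G h k)"
  using groupoid_laws by blast
lemma comp_ident_left [simp]: "g \<in> arrs G \<Longrightarrow> comp G (ident G (rng G g)) g = g"
  using groupoid_laws by blast
lemma comp_ident_right [simp]: "g \<in> arrs G \<Longrightarrow> comp G g (ident G (src G g)) = g"
  using groupoid_laws by blast
lemma src_ginv [simp]: "g \<in> arrs G \<Longrightarrow> src G (ginv G g) = rng G g"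
  using groupoid_laws by blast
lemma rng_ginv [simp]: "g \<in> arrs G \<Longrightarrow> rng G (ginv G g) = src G g"
  using groupoid_laws by blast
lemma comp_ginv_right [simp]: "g \<in> arrs G \<Longrightarrow> comp G g (ginv G g) = ident G (rng G g)"
  using groupoid_laws by blast
lemma comp_ginv_left [simp]: "g \<in> arrs G \<Longrightarrow> comp G (ginv G g) g = ident G (src G g)"
  using groupoid_laws by blast
lemma continuous_map_src: "continuous_map (arr_top G) (obj_top G) (src G)"
  using groupoid_laws by blast
lemma continuous_map_rng: "continuous_map (arr_top G) (obj_top G) (rng G)"
  using groupoid_laws by blast
lemma continuous_map_ginv: "continuous_map (arr_top G) (arr_top G) (ginv G)"
  using groupoid_laws by blast
lemma continuous_map_ident: "continuous_map (obj_top G) (arr_top G) (ident G)"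
  using groupoid_laws by blast
lemma continuous_map_comp:
  "continuous_map (subtopology (prod_topology (arr_top G) (arr_top G)) (composable G)) (arr_top G)
     (\<lambda>(g, h). comp G g h)"
  using topological_groupoid unfolding topological_groupoid_def by blast

lemma ginv_ginv [simp]:
  assumes g: "g \<in> arrs G"
  shows "ginv G (ginv G g) = g"
proof -
  define k where "k = ginv G g"
  have k: "k \<in> arrs G" "ginv G k \<in> arrs G" "rng G (ginv G k) = rng G g"
    using g ginv_in_arrs k_def by auto
  have "ginv G k = comp G (comp G g k) (ginv G k)"
    using comp_ident_left[OF k(2)] k(3) comp_ginv_right[OF g] k_def by simp
  also have "\<dots> = comp G g (comp G k (ginv G k))"
    using comp_assoc[OF g k(1) k(2)] g k k_def by simp
  also have "\<dots> = g"
    using comp_ginv_right[OF k(1)] comp_ident_right[OF g] g k_def by simp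
  finally show ?thesis using k_def by simp
qed

lemma bisection_openin: "bisection G B \<Longrightarrow> openin (arr_top G) B"
  by (simp add: bisection_def)

lemma bisection_imp_arr: "bisection G B \<Longrightarrow> g \<in> B \<Longrightarrow> g \<in> arrs G"
  using bisection_openin openin_subset by blast

lemma open_on_bisections_imp_openin_image:
  assumes open_on: "\<And>B. bisection G B \<Longrightarrow> open_map (subtopology (arr_top G) B) (obj_top G) f"
    and V: "openin (arr_top G) V"
  shows "openin (obj_top G) (f ` V)"
proof -
  have "f ` V = (\<Union>B\<in>Bis G. f ` (B \<inter> V))"
    using V openin_subset etale unfolding etale_def Bis_def by blast
  moreover have "openin (obj_top G) (f ` (B \<inter> V))" if "B \<in> Bis G" for B
  proof -
    have "openin (subtopology (arr_top G) B) (B \<inter> V)"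
      using V openin_subtopology_Int2 by (metis inf_commute)
    then show ?thesis using open_on that unfolding Bis_def open_map_def by blast
  qed
  ultimately show ?thesis by auto
qed

lemma openin_src_image: "openin (arr_top G) V \<Longrightarrow> openin (obj_top G) (src G ` V)"
  by (rule open_on_bisections_imp_openin_image) (simp_all add: bisection_def)

lemma openin_rng_image: "openin (arr_top G) V \<Longrightarrow> openin (obj_top G) (rng G ` V)"
  by (rule open_on_bisections_imp_openin_image) (simp_all add: bisection_def)

lemma bisection_iff_open_inj:
  "bisection G B \<longleftrightarrow> openin (arr_top G) B \<and> inj_on (src G) B \<and> inj_on (rng G) B"
proof
  assume B: "openin (arr_top G) B \<and> inj_on (src G) B \<and> inj_on (rng G) B"
  then have "openin (arr_top G) U" if "openin (subtopology (arr_top G) B) U" for U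
    using that openin_trans_full by blast
  then show "bisection G B"
    using B openin_src_image openin_rng_image unfolding bisection_def open_map_def by blast
qed (simp add: bisection_def)

lemma bisection_openin_subset:
  "bisection G B \<Longrightarrow> openin (arr_top G) V \<Longrightarrow> V \<subseteq> B \<Longrightarrow> bisection G V"
  by (meson bisection_iff_open_inj inj_on_subset)

lemma inj_on_ident: "inj_on (ident G) (objs G)"
  by (metis inj_onI src_ident)

lemma ident_image_eq_iff:
  "V \<subseteq> objs G \<Longrightarrow> W \<subseteq> objs G \<Longrightarrow> ident G ` V = ident G ` W \<longleftrightarrow> V = W"
  by (rule inj_on_image_eq_iff[OF inj_on_ident])

lemma ident_image_subset_iff:
  assumes "V \<subseteq> objs G" "W \<subseteq> objs G"
  shows "ident G ` V \<subseteq> ident G ` W \<longleftrightarrow> V \<subseteq> W"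
  using assms inj_on_image_mem_iff[OF inj_on_ident] by blast

lemma src_ident_image: "W \<subseteq> objs G \<Longrightarrow> src G ` ident G ` W = W"
  by (force simp: image_image)

text \<open>If the bisection B contains a unit, the arrows g of B with ident (src g) in B form an open
  neighbourhood of it, and each such g equals ident (src g) since both lie in B and have the same
  source.\<close>

lemma openin_units: "openin (arr_top G) (ident G ` objs G)"
proof (subst openin_subopen, intro ballI)
  fix u assume "u \<in> ident G ` objs G"
  then obtain x where x: "x \<in> objs G" "u = ident G x" by auto
  then have "u \<in> arrs G" using ident_in_arrs by simp
  then obtain B where B: "bisection G B" "u \<in> B"
    using etale unfolding etale_def by blast
  define W where "W = B \<inter> {g \<in> arrs G. ident G (src G g) \<in> B}"
  have "openin (arr_top G) W"
    unfolding W_def using bisection_openin[OF B(1)]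
      openin_continuous_map_preimage[OF continuous_map_compose[OF continuous_map_src continuous_map_ident]]
    by (simp add: o_def openin_Int)
  moreover have "u \<in> W" using x B ident_in_arrs unfolding W_def by simp
  moreover have "W \<subseteq> ident G ` objs G"
  proof
    fix g assume "g \<in> W"
    then have g: "g \<in> arrs G" "g \<in> B" "ident G (src G g) \<in> B" unfolding W_def by auto
    have "src G (ident G (src G g)) = src G g" using g src_in_objs by simp
    moreover have "inj_on (src G) B" using B(1) bisection_iff_open_inj by blast
    ultimately have "ident G (src G g) = g"
      using g by (auto dest: inj_onD)
    then show "g \<in> ident G ` objs G" using g src_in_objs by (metis imageI)
  qed
  ultimately show "\<exists>T. openin (arr_top G) T \<and> u \<in> T \<and> T \<subseteq> ident G ` objs G" by blast
qed

lemma openin_ident_image: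
  assumes W: "openin (obj_top G) W"
  shows "openin (arr_top G) (ident G ` W)"
proof -
  have "ident G ` W = ident G ` objs G \<inter> {g \<in> arrs G. src G g \<in> W}"
    using W openin_subset ident_in_arrs by fastforce
  then show ?thesis
    using openin_units openin_continuous_map_preimage[OF continuous_map_src W] by (metis openin_Int)
qed

lemma bisection_ident_image:
  assumes W: "openin (obj_top G) W"
  shows "bisection G (ident G ` W)"
proof -
  have "W \<subseteq> objs G" using W openin_subset by blast
  then have "inj_on (src G) (ident G ` W)" "inj_on (rng G) (ident G ` W)"
    by (auto intro!: inj_onI simp: subset_iff)
  then show ?thesis using openin_ident_image[OF W] bisection_iff_open_inj by blast
qed

lemma bis_one_eq: "bis_one G = ident G ` objs G"
  by (simp add: bis_one_def)

lemma mem_bis_mult: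
  "k \<in> bis_mult G s t \<longleftrightarrow> (\<exists>g h. g \<in> s \<and> h \<in> t \<and> src G g = rng G h \<and> k = comp G g h)"
  unfolding bis_mult_def by blast

lemma bis_mult_ident_image:
  assumes "V \<subseteq> objs G" "W \<subseteq> objs G"
  shows "bis_mult G (ident G ` V) (ident G ` W) = ident G ` (V \<inter> W)"
proof (intro equalityI subsetI)
  fix k assume "k \<in> bis_mult G (ident G ` V) (ident G ` W)"
  then obtain x y where "x \<in> V" "y \<in> W" "x = y" "k = comp G (ident G x) (ident G y)"
    using assms unfolding mem_bis_mult by (auto simp: subset_iff)
  then show "k \<in> ident G ` (V \<inter> W)"
    using assms comp_ident_left[OF ident_in_arrs, of x] by auto
next
  fix k assume "k \<in> ident G ` (V \<inter> W)"
  then obtain x where x: "x \<in> V" "x \<in> W" "k = ident G x" by blast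
  then have "k = comp G (ident G x) (ident G x)"
    using assms comp_ident_left[OF ident_in_arrs, of x] by auto
  moreover have "src G (ident G x) = rng G (ident G x)"
    using x assms by auto
  ultimately show "k \<in> bis_mult G (ident G ` V) (ident G ` W)"
    using x unfolding mem_bis_mult by blast
qed

lemma idempotent_arr_eq_ident:
  assumes g: "g \<in> arrs G" and "src G g = rng G g" and gg: "comp G g g = g"
  shows "g = ident G (src G g)"
proof -
  have "ident G (src G g) = comp G (ginv G g) (comp G g g)"
    using gg comp_ginv_left[OF g] by simp
  also have "\<dots> = comp G (comp G (ginv G g) g) g"
    using comp_assoc[OF ginv_in_arrs[OF g] g g] assms by (simp del: comp_ginv_left)
  also have "\<dots> = g"
    using assms comp_ident_left[OF g] by simp
  finally show ?thesis by (rule sym)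
qed

text \<open>Writing g = a b with a, b in the idempotent bisection e, injectivity of the source and of
  the range on e forces a = b = g, so g is an idempotent arrow.\<close>

lemma idempotent_bisection_units:
  assumes e: "bisection G e" and ee: "bis_mult G e e = e" and g: "g \<in> e"
  shows "g = ident G (src G g)"
proof -
  have "g \<in> bis_mult G e e" using g ee by simp
  then obtain a b where ab: "a \<in> e" "b \<in> e" "src G a = rng G b" "g = comp G a b"
    unfolding mem_bis_mult by blast
  have arrs: "g \<in> arrs G" "a \<in> arrs G" "b \<in> arrs G"
    using g ab bisection_imp_arr[OF e] by auto
  have inj: "inj_on (src G) e" "inj_on (rng G) e"
    using e bisection_iff_open_inj by auto
  have "src G g = src G b" "rng G g = rng G a"
    using ab arrs by simp_all
  then have "g = b" "g = a"
    using inj ab g by (auto dest: inj_onD)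
  then show ?thesis
    using idempotent_arr_eq_ident[OF arrs(1)] ab by metis
qed

lemma BisE_iff_ident_image: "e \<in> BisE G \<longleftrightarrow> (\<exists>W. openin (obj_top G) W \<and> e = ident G ` W)"
proof
  assume "e \<in> BisE G"
  then have e: "bisection G e" "bis_mult G e e = e" unfolding idems_def Bis_def by auto
  have "e = ident G ` (src G ` e)"
    using idempotent_bisection_units[OF e] by (auto simp: image_image intro: rev_image_eqI)
  moreover have "openin (obj_top G) (src G ` e)"
    using openin_src_image bisection_openin[OF e(1)] by blast
  ultimately show "\<exists>W. openin (obj_top G) W \<and> e = ident G ` W" by blast
next
  assume "\<exists>W. openin (obj_top G) W \<and> e = ident G ` W"
  then obtain W where W: "openin (obj_top G) W" "e = ident G ` W" by blast
  then show "e \<in> BisE G"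
    using bis_mult_ident_image[of W W] bisection_ident_image openin_subset[OF W(1)]
    unfolding idems_def Bis_def by simp
qed

lemma bis_one_BisE: "bis_one G \<in> BisE G"
  unfolding BisE_iff_ident_image bis_one_eq by blast

definition arrow_at :: "'a set \<Rightarrow> 'o \<Rightarrow> 'a" where
  "arrow_at B x = (THE g. g \<in> B \<and> src G g = x)"

lemma arrow_at_src:
  assumes "bisection G B" "g \<in> B"
  shows "arrow_at B (src G g) = g"
  unfolding arrow_at_def
proof (rule the_equality)
  show "\<And>h. h \<in> B \<and> src G h = src G g \<Longrightarrow> h = g"
    using assms bisection_iff_open_inj by (meson inj_onD)
qed (use assms in auto)

lemma arrow_at_in:
  assumes "bisection G B" "x \<in> src G ` B"
  shows "arrow_at B x \<in> B" "src G (arrow_at B x) = x"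
  using assms arrow_at_src by auto

lemma continuous_map_arrow_at:
  assumes B: "bisection G B"
  shows "continuous_map (subtopology (obj_top G) (src G ` B)) (arr_top G) (arrow_at B)"
  unfolding continuous_map_def
proof (intro conjI allI impI)
  show "arrow_at B \<in> topspace (subtopology (obj_top G) (src G ` B)) \<rightarrow> arrs G"
    using arrow_at_in[OF B] bisection_imp_arr[OF B] by auto
  fix U assume U: "openin (arr_top G) U"
  have "{x \<in> topspace (subtopology (obj_top G) (src G ` B)). arrow_at B x \<in> U}
      = src G ` (B \<inter> U) \<inter> src G ` B"
  proof (intro equalityI subsetI)
    fix x assume "x \<in> {x \<in> topspace (subtopology (obj_top G) (src G ` B)). arrow_at B x \<in> U}"
    then have "x \<in> src G ` B" "arrow_at B x \<in> U" by auto
    then show "x \<in> src G ` (B \<inter> U) \<inter> src G ` B"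
      using arrow_at_in[OF B] by (metis IntI image_eqI)
  next
    fix x assume "x \<in> src G ` (B \<inter> U) \<inter> src G ` B"
    then obtain g where "g \<in> B" "g \<in> U" "x = src G g" by blast
    then show "x \<in> {x \<in> topspace (subtopology (obj_top G) (src G ` B)). arrow_at B x \<in> U}"
      using arrow_at_src[OF B] bisection_imp_arr[OF B] src_in_objs by auto
  qed
  moreover have "openin (obj_top G) (src G ` (B \<inter> U))"
    using openin_src_image U bisection_openin[OF B] by blast
  ultimately show "openin (subtopology (obj_top G) (src G ` B))
      {x \<in> topspace (subtopology (obj_top G) (src G ` B)). arrow_at B x \<in> U}"
    using openin_subtopology by metis
qed

lemma comp_comp_ginv:
  assumes g: "g \<in> arrs G" and h: "h \<in> arrs G" and gh: "src G g = rng G h"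
  shows "comp G (comp G g h) (ginv G h) = g"
proof -
  have "comp G (comp G g h) (ginv G h) = comp G g (comp G h (ginv G h))"
    by (rule comp_assoc) (simp_all add: assms ginv_in_arrs)
  also have "\<dots> = g"
    using comp_ident_right[OF g] gh h by simp
  finally show ?thesis .
qed

lemma comp_ginv_comp:
  assumes k: "k \<in> arrs G" and h: "h \<in> arrs G" and kh: "src G k = src G h"
  shows "comp G (comp G k (ginv G h)) h = k"
proof -
  have "comp G (comp G k (ginv G h)) h = comp G k (comp G (ginv G h) h)"
    by (rule comp_assoc) (simp_all add: assms ginv_in_arrs)
  also have "\<dots> = k"
    using comp_ident_right[OF k] kh h by simp
  finally show ?thesis .
qed

text \<open>Openness of a product s t: an arrow k with source in src t lies in s t iff dividing it by
  the arrow of t over its source lands in s, and this division is continuous.\<close>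

lemma continuous_map_divide_arrow_at:
  assumes t: "bisection G t"
  shows "continuous_map (subtopology (arr_top G) {k \<in> arrs G. src G k \<in> src G ` t}) (arr_top G)
           (\<lambda>k. comp G k (ginv G (arrow_at t (src G k))))"
proof -
  let ?D = "subtopology (arr_top G) {k \<in> arrs G. src G k \<in> src G ` t}"
  have "continuous_map ?D (subtopology (obj_top G) (src G ` t)) (src G)"
    unfolding continuous_map_in_subtopology
    using continuous_map_from_subtopology[OF continuous_map_src] by auto
  then have "continuous_map ?D (arr_top G) (ginv G \<circ> (arrow_at t \<circ> src G))"
    using continuous_map_compose[OF continuous_map_compose[OF _ continuous_map_arrow_at[OF t]]
        continuous_map_ginv] by blast
  then have "continuous_map ?D (arr_top G) (\<lambda>k. ginv G (arrow_at t (src G k)))"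
    by (simp add: o_def)
  moreover have "continuous_map ?D (arr_top G) (\<lambda>k. k)"
    using continuous_map_from_subtopology[OF continuous_map_id] by (simp add: id_def)
  ultimately have "continuous_map ?D (prod_topology (arr_top G) (arr_top G))
      (\<lambda>k. (k, ginv G (arrow_at t (src G k))))"
    by (intro continuous_map_pairedI)
  moreover have "(k, ginv G (arrow_at t (src G k))) \<in> composable G" if "k \<in> topspace ?D" for k
    using that arrow_at_in[OF t] bisection_imp_arr[OF t] ginv_in_arrs
    unfolding composable_def by auto
  ultimately have "continuous_map ?D (subtopology (prod_topology (arr_top G) (arr_top G)) (composable G))
      (\<lambda>k. (k, ginv G (arrow_at t (src G k))))"
    unfolding continuous_map_in_subtopology by blast
  from continuous_map_compose[OF this continuous_map_comp] show ?thesis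
    by (simp add: o_def)
qed

lemma bis_mult_eq_divide_preimage:
  assumes s: "bisection G s" and t: "bisection G t"
  shows "bis_mult G s t = {k \<in> {k \<in> arrs G. src G k \<in> src G ` t}.
                              comp G k (ginv G (arrow_at t (src G k))) \<in> s}"
proof (intro equalityI subsetI)
  fix k assume "k \<in> bis_mult G s t"
  then obtain g h where gh: "g \<in> s" "h \<in> t" "src G g = rng G h" "k = comp G g h"
    unfolding mem_bis_mult by blast
  have arrs: "g \<in> arrs G" "h \<in> arrs G" using gh s t bisection_imp_arr by auto
  then have "k \<in> arrs G" "src G k = src G h" using gh comp_in_arrs by auto
  moreover have "arrow_at t (src G h) = h" using arrow_at_src[OF t gh(2)] .
  ultimately show "k \<in> {k \<in> {k \<in> arrs G. src G k \<in> src G ` t}.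
                       comp G k (ginv G (arrow_at t (src G k))) \<in> s}"
    using gh arrs comp_comp_ginv by auto
next
  fix k assume "k \<in> {k \<in> {k \<in> arrs G. src G k \<in> src G ` t}.
                       comp G k (ginv G (arrow_at t (src G k))) \<in> s}"
  then have k: "k \<in> arrs G" "src G k \<in> src G ` t" "comp G k (ginv G (arrow_at t (src G k))) \<in> s"
    by auto
  define h where "h = arrow_at t (src G k)"
  have h: "h \<in> t" "src G h = src G k" "h \<in> arrs G"
    using arrow_at_in[OF t k(2)] bisection_imp_arr[OF t] h_def by auto
  have "k = comp G (comp G k (ginv G h)) h"
    using comp_ginv_comp k h by simp
  moreover have "src G (comp G k (ginv G h)) = rng G h"
    using k h ginv_in_arrs by simp
  ultimately show "k \<in> bis_mult G s t"
    using k(3) h unfolding mem_bis_mult h_def by blast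
qed

lemma openin_bis_mult:
  assumes s: "bisection G s" and t: "bisection G t"
  shows "openin (arr_top G) (bis_mult G s t)"
proof -
  have "openin (subtopology (arr_top G) {k \<in> arrs G. src G k \<in> src G ` t})
      {k \<in> {k \<in> arrs G. src G k \<in> src G ` t}. comp G k (ginv G (arrow_at t (src G k))) \<in> s}"
    using openin_continuous_map_preimage[OF continuous_map_divide_arrow_at[OF t] bisection_openin[OF s]]
    by (simp add: Int_absorb1)
  moreover have "openin (arr_top G) {k \<in> arrs G. src G k \<in> src G ` t}"
    using openin_continuous_map_preimage[OF continuous_map_src openin_src_image[OF bisection_openin[OF t]]] .
  ultimately show ?thesis
    unfolding bis_mult_eq_divide_preimage[OF s t] by (rule openin_trans_full)
qed

lemma inj_on_src_bis_mult:
  assumes s: "bisection G s" and t: "bisection G t"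
  shows "inj_on (src G) (bis_mult G s t)"
proof (rule inj_onI)
  have inj: "inj_on (src G) s" "inj_on (src G) t" using s t bisection_iff_open_inj by auto
  fix k1 k2 assume k: "k1 \<in> bis_mult G s t" "k2 \<in> bis_mult G s t" "src G k1 = src G k2"
  obtain g1 h1 where 1: "g1 \<in> s" "h1 \<in> t" "src G g1 = rng G h1" "k1 = comp G g1 h1"
    using k(1) unfolding mem_bis_mult by blast
  obtain g2 h2 where 2: "g2 \<in> s" "h2 \<in> t" "src G g2 = rng G h2" "k2 = comp G g2 h2"
    using k(2) unfolding mem_bis_mult by blast
  have "src G h1 = src G h2" using k(3) 1 2 s t bisection_imp_arr by auto
  then have hh: "h1 = h2" by (rule inj_onD[OF inj(2) _ 1(2) 2(2)])
  then have "src G g1 = src G g2" using 1 2 by simp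
  then have "g1 = g2" by (rule inj_onD[OF inj(1) _ 1(1) 2(1)])
  then show "k1 = k2" using hh 1 2 by simp
qed

lemma inj_on_rng_bis_mult:
  assumes s: "bisection G s" and t: "bisection G t"
  shows "inj_on (rng G) (bis_mult G s t)"
proof (rule inj_onI)
  have inj: "inj_on (rng G) s" "inj_on (rng G) t" using s t bisection_iff_open_inj by auto
  fix k1 k2 assume k: "k1 \<in> bis_mult G s t" "k2 \<in> bis_mult G s t" "rng G k1 = rng G k2"
  obtain g1 h1 where 1: "g1 \<in> s" "h1 \<in> t" "src G g1 = rng G h1" "k1 = comp G g1 h1"
    using k(1) unfolding mem_bis_mult by blast
  obtain g2 h2 where 2: "g2 \<in> s" "h2 \<in> t" "src G g2 = rng G h2" "k2 = comp G g2 h2"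
    using k(2) unfolding mem_bis_mult by blast
  have "rng G g1 = rng G g2" using k(3) 1 2 s t bisection_imp_arr by auto
  then have gg: "g1 = g2" by (rule inj_onD[OF inj(1) _ 1(1) 2(1)])
  then have "rng G h1 = rng G h2" using 1 2 by simp
  then have "h1 = h2" by (rule inj_onD[OF inj(2) _ 1(2) 2(2)])
  then show "k1 = k2" using gg 1 2 by simp
qed

lemma bisection_bis_mult:
  "bisection G s \<Longrightarrow> bisection G t \<Longrightarrow> bisection G (bis_mult G s t)"
  by (simp add: bisection_iff_open_inj openin_bis_mult inj_on_src_bis_mult inj_on_rng_bis_mult)

lemma bis_star_eq_ginv_preimage:
  assumes s: "bisection G s"
  shows "bis_star G s = {g \<in> arrs G. ginv G g \<in> s}"
  using bisection_imp_arr[OF s] ginv_in_arrs unfolding bis_star_def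
  by (auto intro: rev_image_eqI[where x="ginv G _"])

lemma bisection_bis_star:
  assumes s: "bisection G s"
  shows "bisection G (bis_star G s)"
proof -
  have "openin (arr_top G) (bis_star G s)"
    unfolding bis_star_eq_ginv_preimage[OF s]
    by (rule openin_continuous_map_preimage[OF continuous_map_ginv bisection_openin[OF s]])
  moreover have "inj_on (src G \<circ> ginv G) s" "inj_on (rng G \<circ> ginv G) s"
    using s bisection_imp_arr[OF s] inj_on_cong[of s "src G \<circ> ginv G" "rng G"]
      inj_on_cong[of s "rng G \<circ> ginv G" "src G"]
    unfolding bisection_iff_open_inj by auto
  ultimately show ?thesis
    unfolding bisection_iff_open_inj bis_star_def by (blast intro: inj_on_imageI)
qed

subsection \<open>Point characters and irreducible idempotents\<close>

abbreviation "bis_characters \<equiv> characters (Bis G) (bis_mult G) (bis_one G) bis_zero"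
abbreviation "bis_charU \<equiv> charU (Bis G) (bis_mult G) (bis_one G) bis_zero"
abbreviation "bis_char_top \<equiv> char_top (Bis G) (bis_mult G) (bis_one G) bis_zero"
abbreviation "bis_char_act \<equiv> char_act (Bis G) (bis_mult G) (bis_star G)"
abbreviation "bis_germ \<equiv> germ (Bis G) (bis_mult G) (bis_star G) (bis_one G) bis_zero"
abbreviation "bis_germ_pairs \<equiv> germ_pairs (Bis G) (bis_mult G) (bis_star G) (bis_one G) bis_zero"
abbreviation "bis_germ_groupoid \<equiv> germ_groupoid (Bis G) (bis_mult G) (bis_star G) (bis_one G) bis_zero"

definition point_char :: "'o \<Rightarrow> 'a set \<Rightarrow> bool" where
  "point_char x = (\<lambda>f. f \<in> BisE G \<and> x \<in> src G ` f)"

lemma point_char_ident_image: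
  assumes "openin (obj_top G) W"
  shows "point_char x (ident G ` W) \<longleftrightarrow> x \<in> W"
  using assms openin_subset src_ident_image BisE_iff_ident_image unfolding point_char_def by metis

lemma point_char_in_characters:
  assumes x: "x \<in> objs G"
  shows "point_char x \<in> bis_characters"
  unfolding characters_def
proof (intro CollectI conjI allI impI ballI)
  show "\<not> point_char x bis_zero" unfolding point_char_def bis_zero_def by simp
  show "point_char x (bis_one G)"
    unfolding bis_one_eq using point_char_ident_image[OF openin_topspace] x by simp
  fix e f assume "e \<in> BisE G" "f \<in> BisE G"
  then obtain V W where V: "openin (obj_top G) V" "e = ident G ` V"
    and W: "openin (obj_top G) W" "f = ident G ` W"
    unfolding BisE_iff_ident_image by blast
  then have "bis_mult G e f = ident G ` (V \<inter> W)"
    using bis_mult_ident_image[OF openin_subset[OF V(1)] openin_subset[OF W(1)]] by simp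
  moreover have "openin (obj_top G) (V \<inter> W)" using V W by blast
  ultimately show "point_char x (bis_mult G e f) = (point_char x e \<and> point_char x f)"
    using V W point_char_ident_image by simp
qed (simp add: point_char_def)

lemma ident_image_indecomposable_iff:
  assumes V: "openin (obj_top G) V"
  shows "(\<forall>e1\<in>BisE G. \<forall>e2\<in>BisE G. ident G ` V = bis_mult G e1 e2 \<longrightarrow>
            e1 = ident G ` V \<or> e2 = ident G ` V)
     \<longleftrightarrow> (\<forall>V1 V2. openin (obj_top G) V1 \<and> openin (obj_top G) V2 \<and> V = V1 \<inter> V2 \<longrightarrow>
            V1 = V \<or> V2 = V)"
proof -
  have mult: "ident G ` V = bis_mult G (ident G ` V1) (ident G ` V2) \<longleftrightarrow> V = V1 \<inter> V2"
    and eq: "ident G ` V1 = ident G ` V \<longleftrightarrow> V1 = V"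
    if "openin (obj_top G) V1" "openin (obj_top G) V2" for V1 V2
    using that V openin_subset bis_mult_ident_image ident_image_eq_iff
    by (metis inf.coboundedI1)+
  show ?thesis
  proof (intro iffI allI impI ballI)
    fix V1 V2 assume L: "\<forall>e1\<in>BisE G. \<forall>e2\<in>BisE G. ident G ` V = bis_mult G e1 e2 \<longrightarrow>
                  e1 = ident G ` V \<or> e2 = ident G ` V"
      and V12: "openin (obj_top G) V1 \<and> openin (obj_top G) V2 \<and> V = V1 \<inter> V2"
    then have "ident G ` V1 = ident G ` V \<or> ident G ` V2 = ident G ` V"
      using mult BisE_iff_ident_image by blast
    then show "V1 = V \<or> V2 = V" using eq V12 by blast
  next
    fix e1 e2 assume R: "\<forall>V1 V2. openin (obj_top G) V1 \<and> openin (obj_top G) V2 \<and> V = V1 \<inter> V2 \<longrightarrow>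
                  V1 = V \<or> V2 = V"
      and "e1 \<in> BisE G" "e2 \<in> BisE G" and e12: "ident G ` V = bis_mult G e1 e2"
    then obtain V1 V2 where V12: "openin (obj_top G) V1" "openin (obj_top G) V2"
      "e1 = ident G ` V1" "e2 = ident G ` V2"
      unfolding BisE_iff_ident_image by blast
    then have "V = V1 \<inter> V2" using mult e12 by blast
    then show "e1 = ident G ` V \<or> e2 = ident G ` V" using R eq V12 by blast
  qed
qed

lemma irreducible_idem_iff_meet_irreducible_open:
  "irreducible_idem G e \<longleftrightarrow> (\<exists>V. meet_irreducible_open (obj_top G) V \<and> e = ident G ` V)"
proof -
  have one: "ident G ` V \<noteq> bis_one G \<longleftrightarrow> V \<noteq> objs G" if "openin (obj_top G) V" for V
    using ident_image_eq_iff[OF openin_subset[OF that] subset_refl] unfolding bis_one_eq by simp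
  show ?thesis
  proof
    assume e: "irreducible_idem G e"
    then obtain V where V: "openin (obj_top G) V" "e = ident G ` V"
      unfolding irreducible_idem_def BisE_iff_ident_image by blast
    then show "\<exists>V. meet_irreducible_open (obj_top G) V \<and> e = ident G ` V"
      using e ident_image_indecomposable_iff[OF V(1)] one[OF V(1)]
      unfolding irreducible_idem_def meet_irreducible_open_def by auto
  next
    assume "\<exists>V. meet_irreducible_open (obj_top G) V \<and> e = ident G ` V"
    then obtain V where V: "meet_irreducible_open (obj_top G) V" "e = ident G ` V" by blast
    then have "openin (obj_top G) V" unfolding meet_irreducible_open_def by blast
    then show "irreducible_idem G e"
      using V ident_image_indecomposable_iff one BisE_iff_ident_image
      unfolding irreducible_idem_def meet_irreducible_open_def by auto
  qed
qed

lemma phi_irr_ident_compl_closure_of: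
  assumes x: "x \<in> objs G"
  shows "phi_irr G (ident G ` (objs G - obj_top G closure_of {x})) = point_char x"
proof
  fix f
  show "phi_irr G (ident G ` (objs G - obj_top G closure_of {x})) f = point_char x f"
  proof (cases "f \<in> BisE G")
    case True
    then obtain W where W: "openin (obj_top G) W" "f = ident G ` W"
      using BisE_iff_ident_image by blast
    have "f \<subseteq> ident G ` (objs G - obj_top G closure_of {x}) \<longleftrightarrow> x \<notin> W"
      using W ident_image_subset_iff[OF openin_subset[OF W(1)]]
        subset_compl_closure_of_singleton_iff[OF W(1) x] by simp
    then show ?thesis
      unfolding phi_irr_def using True W point_char_ident_image by simp
  qed (simp add: phi_irr_def point_char_def)
qed

lemma bis_mult_star_ident_image:
  assumes s: "bisection G s" and V: "V \<subseteq> objs G"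
  shows "bis_mult G (bis_star G s) (ident G ` V) = ginv G ` {a \<in> s. rng G a \<in> V}"
proof (intro equalityI subsetI)
  fix k assume "k \<in> bis_mult G (bis_star G s) (ident G ` V)"
  then obtain a y where a: "a \<in> s" "y \<in> V" "src G (ginv G a) = rng G (ident G y)"
      "k = comp G (ginv G a) (ident G y)"
    unfolding mem_bis_mult bis_star_def by blast
  moreover have "a \<in> arrs G" "y \<in> objs G" using bisection_imp_arr[OF s a(1)] a V by auto
  ultimately have "rng G a = y" "k = ginv G a"
    using comp_ident_right[OF ginv_in_arrs] by auto
  then show "k \<in> ginv G ` {a \<in> s. rng G a \<in> V}" using a by blast
next
  fix k assume "k \<in> ginv G ` {a \<in> s. rng G a \<in> V}"
  then obtain a where a: "a \<in> s" "rng G a \<in> V" "k = ginv G a" by blast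
  have "a \<in> arrs G" using bisection_imp_arr[OF s a(1)] .
  then have "k = comp G (ginv G a) (ident G (rng G a))" "src G (ginv G a) = rng G (ident G (rng G a))"
    using a comp_ident_right[OF ginv_in_arrs] rng_in_objs by auto
  moreover have "ginv G a \<in> bis_star G s" unfolding bis_star_def using a by blast
  ultimately show "k \<in> bis_mult G (bis_star G s) (ident G ` V)"
    unfolding mem_bis_mult using a by blast
qed

lemma bis_conj_ident_image:
  assumes s: "bisection G s" and V: "V \<subseteq> objs G"
  shows "bis_mult G (bis_mult G (bis_star G s) (ident G ` V)) s = ident G ` src G ` {a \<in> s. rng G a \<in> V}"
proof (intro equalityI subsetI)
  fix k assume "k \<in> bis_mult G (bis_mult G (bis_star G s) (ident G ` V)) s"
  then obtain a c where ac: "a \<in> s" "rng G a \<in> V" "c \<in> s" "src G (ginv G a) = rng G c"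
      "k = comp G (ginv G a) c"
    unfolding mem_bis_mult bis_mult_star_ident_image[OF s V] by blast
  have arrs: "a \<in> arrs G" "c \<in> arrs G" using bisection_imp_arr[OF s] ac by auto
  have "inj_on (rng G) s" using s bisection_iff_open_inj by blast
  moreover have "rng G a = rng G c" using ac arrs by simp
  ultimately have "a = c" using ac by (auto dest: inj_onD)
  then have "k = ident G (src G a)" using ac arrs by simp
  then show "k \<in> ident G ` src G ` {a \<in> s. rng G a \<in> V}" using ac by blast
next
  fix k assume "k \<in> ident G ` src G ` {a \<in> s. rng G a \<in> V}"
  then obtain a where a: "a \<in> s" "rng G a \<in> V" "k = ident G (src G a)" by blast
  have "a \<in> arrs G" using bisection_imp_arr[OF s a(1)] .
  then have "k = comp G (ginv G a) a" "src G (ginv G a) = rng G a" using a by simp_all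
  moreover have "ginv G a \<in> ginv G ` {a \<in> s. rng G a \<in> V}" using a by blast
  ultimately show "k \<in> bis_mult G (bis_mult G (bis_star G s) (ident G ` V)) s"
    unfolding mem_bis_mult bis_mult_star_ident_image[OF s V] using a by blast
qed

lemma bis_star_mult_self:
  assumes s: "bisection G s"
  shows "bis_mult G (bis_star G s) s = ident G ` src G ` s"
proof -
  have all: "{a \<in> s. rng G a \<in> objs G} = s" using bisection_imp_arr[OF s] rng_in_objs by blast
  then have "bis_mult G (bis_star G s) (ident G ` objs G) = bis_star G s"
    using bis_mult_star_ident_image[OF s order_refl] by (simp add: bis_star_def)
  then show ?thesis
    using bis_conj_ident_image[OF s order_refl] all by simp
qed

lemma bis_star_mult_self_BisE: "bisection G s \<Longrightarrow> bis_mult G (bis_star G s) s \<in> BisE G"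
  using bis_star_mult_self BisE_iff_ident_image openin_src_image bisection_openin by metis

lemma openin_src_image_rng_preimage:
  assumes s: "bisection G s" and V: "openin (obj_top G) V"
  shows "openin (obj_top G) (src G ` {a \<in> s. rng G a \<in> V})"
proof -
  have "{a \<in> s. rng G a \<in> V} = s \<inter> {a \<in> arrs G. rng G a \<in> V}"
    using bisection_imp_arr[OF s] by blast
  moreover have "openin (arr_top G) (s \<inter> {a \<in> arrs G. rng G a \<in> V})"
    using bisection_openin[OF s] openin_continuous_map_preimage[OF continuous_map_rng V] by blast
  ultimately show ?thesis using openin_src_image by simp
qed

lemma src_image_rng_preimage_iff:
  assumes s: "bisection G s" and x: "x \<in> src G ` s"
  shows "x \<in> src G ` {a \<in> s. rng G a \<in> V} \<longleftrightarrow> rng G (arrow_at s x) \<in> V"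
  using arrow_at_in[OF s x] arrow_at_src[OF s] by (force intro: rev_image_eqI)

lemma rng_arrow_at_in_objs: "bisection G s \<Longrightarrow> x \<in> src G ` s \<Longrightarrow> rng G (arrow_at s x) \<in> objs G"
  using arrow_at_in bisection_imp_arr rng_in_objs by blast

lemma point_char_in_charU_iff:
  assumes s: "bisection G s" and x: "x \<in> objs G"
  shows "point_char x \<in> bis_charU (bis_mult G (bis_star G s) s)
    \<longleftrightarrow> x \<in> src G ` s"
  unfolding charU_def bis_star_mult_self[OF s]
  using point_char_in_characters[OF x] point_char_ident_image[OF openin_src_image[OF bisection_openin[OF s]]]
  by simp

lemma char_act_point_char:
  assumes s: "bisection G s" and x: "x \<in> src G ` s"
  shows "bis_char_act s (point_char x) = point_char (rng G (arrow_at s x))"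
proof
  fix f
  show "bis_char_act s (point_char x) f = point_char (rng G (arrow_at s x)) f"
  proof (cases "f \<in> BisE G")
    case True
    then obtain V where V: "openin (obj_top G) V" "f = ident G ` V"
      unfolding BisE_iff_ident_image by blast
    have "bis_char_act s (point_char x) f
        = point_char x (ident G ` src G ` {a \<in> s. rng G a \<in> V})"
      unfolding char_act_def using True V bis_conj_ident_image[OF s openin_subset[OF V(1)]] by simp
    also have "\<dots> = (rng G (arrow_at s x) \<in> V)"
      using point_char_ident_image[OF openin_src_image_rng_preimage[OF s V(1)]]
        src_image_rng_preimage_iff[OF s x] by simp
    also have "\<dots> = point_char (rng G (arrow_at s x)) f"
      using point_char_ident_image[OF V(1)] V(2) by simp
    finally show ?thesis .
  qed (simp add: char_act_def point_char_def)
qed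

lemma S_invariant_point_chars:
  "S_invariant (Bis G) (bis_mult G) (bis_star G) (bis_one G) bis_zero (point_char ` objs G)"
  unfolding S_invariant_def
proof (intro ballI impI)
  fix s \<phi> assume s: "s \<in> Bis G" and "\<phi> \<in> point_char ` objs G"
    and \<phi>: "\<phi> \<in> bis_charU (bis_mult G (bis_star G s) s)"
  then obtain x where x: "x \<in> objs G" "\<phi> = point_char x" by blast
  have s: "bisection G s" using s unfolding Bis_def by simp
  then have "x \<in> src G ` s" using \<phi> x point_char_in_charU_iff by simp
  then show "bis_char_act s \<phi> \<in> point_char ` objs G"
    using char_act_point_char[OF s] rng_arrow_at_in_objs[OF s] x by simp
qed

subsection \<open>Germs of arrows\<close>

lemma bis_mult_ident_image_right:
  assumes s: "bisection G s" and V: "V \<subseteq> objs G"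
  shows "bis_mult G s (ident G ` V) = {g \<in> s. src G g \<in> V}"
proof (intro equalityI subsetI)
  fix k assume "k \<in> bis_mult G s (ident G ` V)"
  then obtain g y where gy: "g \<in> s" "y \<in> V" "src G g = rng G (ident G y)" "k = comp G g (ident G y)"
    unfolding mem_bis_mult by blast
  moreover have "g \<in> arrs G" "y \<in> objs G" using bisection_imp_arr[OF s] gy V by auto
  ultimately show "k \<in> {g \<in> s. src G g \<in> V}" by auto
next
  fix k assume k: "k \<in> {g \<in> s. src G g \<in> V}"
  then have "k \<in> arrs G" using bisection_imp_arr[OF s] by blast
  then have "k = comp G k (ident G (src G k))" "src G k = rng G (ident G (src G k))"
    using src_in_objs by simp_all
  then show "k \<in> bis_mult G s (ident G ` V)" using k unfolding mem_bis_mult by blast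
qed

lemma bisection_src_preimage_src_image:
  assumes s: "bisection G s" and W: "W \<subseteq> s"
  shows "{g \<in> s. src G g \<in> src G ` W} = W"
proof -
  have "inj_on (src G) s" using s bisection_iff_open_inj by blast
  then show ?thesis using W by (auto dest: inj_onD)
qed

text \<open>For the converse, the idempotent ident ` src G ` (s \<inter> t) witnesses equality of the germs.\<close>

lemma same_germ_iff:
  assumes s: "bisection G s" and t: "bisection G t" and g: "g \<in> s"
  shows "(\<exists>e\<in>BisE G. point_char (src G g) e \<and> bis_mult G s e = bis_mult G t e) \<longleftrightarrow> g \<in> t"
proof
  assume "\<exists>e\<in>BisE G. point_char (src G g) e \<and> bis_mult G s e = bis_mult G t e"
  then obtain e where e: "e \<in> BisE G" "point_char (src G g) e" "bis_mult G s e = bis_mult G t e"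
    by blast
  then obtain V where V: "openin (obj_top G) V" "e = ident G ` V"
    unfolding BisE_iff_ident_image by blast
  then have "src G g \<in> V" using e(2) point_char_ident_image by blast
  then have "g \<in> bis_mult G s (ident G ` V)"
    using g bis_mult_ident_image_right[OF s openin_subset[OF V(1)]] by simp
  then have "g \<in> bis_mult G t (ident G ` V)"
    using e(3) V(2) by simp
  then show "g \<in> t"
    using bis_mult_ident_image_right[OF t openin_subset[OF V(1)]] by simp
next
  assume "g \<in> t"
  define V where "V = src G ` (s \<inter> t)"
  have V: "openin (obj_top G) V"
    unfolding V_def using openin_src_image bisection_openin[OF s] bisection_openin[OF t] by blast
  then have "ident G ` V \<in> BisE G" "point_char (src G g) (ident G ` V)"
    using BisE_iff_ident_image point_char_ident_image g \<open>g \<in> t\<close> unfolding V_def by auto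
  moreover have "bis_mult G s (ident G ` V) = bis_mult G t (ident G ` V)"
    using bis_mult_ident_image_right[OF _ openin_subset[OF V]] s t
      bisection_src_preimage_src_image[OF s, of "s \<inter> t"]
      bisection_src_preimage_src_image[OF t, of "s \<inter> t"]
    unfolding V_def by (simp add: Int_commute)
  ultimately show "\<exists>e\<in>BisE G. point_char (src G g) e \<and> bis_mult G s e = bis_mult G t e" by blast
qed

lemma germ_pairs_point_char_iff:
  assumes x: "x \<in> objs G"
  shows "(t, point_char x) \<in> bis_germ_pairs \<longleftrightarrow> bisection G t \<and> x \<in> src G ` t"
  using point_char_in_charU_iff[OF _ x, of t] unfolding germ_pairs_def Bis_def by auto

lemma mem_bis_germ_iff:
  assumes s: "bisection G s" and g: "g \<in> s"
  shows "(t, \<psi>) \<in> bis_germ s (point_char (src G g))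
    \<longleftrightarrow> \<psi> = point_char (src G g) \<and> bisection G t \<and> g \<in> t"
proof -
  have x: "src G g \<in> objs G" using bisection_imp_arr[OF s g] src_in_objs by blast
  have "(s, point_char (src G g)) \<in> bis_germ_pairs"
    using germ_pairs_point_char_iff[OF x] s g by blast
  then have "(t, \<psi>) \<in> bis_germ s (point_char (src G g))
      \<longleftrightarrow> (t, \<psi>) \<in> bis_germ_pairs \<and> \<psi> = point_char (src G g) \<and>
          (\<exists>e\<in>BisE G. point_char (src G g) e \<and> bis_mult G s e = bis_mult G t e)"
    unfolding germ_def germ_rel_def by auto
  also have "\<dots> \<longleftrightarrow> \<psi> = point_char (src G g) \<and> bisection G t \<and> g \<in> t"
    using germ_pairs_point_char_iff[OF x] same_germ_iff[OF s _ g] by blast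
  finally show ?thesis .
qed

definition bisection_through :: "'a \<Rightarrow> 'a set" where
  "bisection_through g = (SOME B. bisection G B \<and> g \<in> B)"

lemma bisection_through:
  assumes "g \<in> arrs G"
  shows "bisection G (bisection_through g)" and "g \<in> bisection_through g"
proof -
  have "\<exists>B. bisection G B \<and> g \<in> B" using etale assms unfolding etale_def by blast
  then show "bisection G (bisection_through g)" "g \<in> bisection_through g"
    unfolding bisection_through_def by (metis (mono_tags, lifting) someI_ex)+
qed

text \<open>By germ_of_arrow_eq, the choice of bisection through g does not matter.\<close>

definition germ_of_arrow :: "'a \<Rightarrow> ('a set \<times> ('a set \<Rightarrow> bool)) set" where
  "germ_of_arrow g = bis_germ (bisection_through g) (point_char (src G g))"

lemma mem_germ_of_arrow_iff:
  assumes "g \<in> arrs G"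
  shows "(t, \<psi>) \<in> germ_of_arrow g \<longleftrightarrow> \<psi> = point_char (src G g) \<and> bisection G t \<and> g \<in> t"
  unfolding germ_of_arrow_def using mem_bis_germ_iff bisection_through[OF assms] by blast

lemma germ_of_arrow_eq:
  assumes s: "bisection G s" and g: "g \<in> s"
  shows "germ_of_arrow g = bis_germ s (point_char (src G g))"
  using mem_germ_of_arrow_iff[OF bisection_imp_arr[OF s g]] mem_bis_germ_iff[OF s g] by auto

lemma some_elem_germ_of_arrow:
  assumes g: "g \<in> arrs G"
  obtains t where "some_elem (germ_of_arrow g) = (t, point_char (src G g))" "bisection G t" "g \<in> t"
proof -
  have "(bisection_through g, point_char (src G g)) \<in> germ_of_arrow g"
    using mem_germ_of_arrow_iff[OF g] bisection_through[OF g] by blast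
  then have "some_elem (germ_of_arrow g) \<in> germ_of_arrow g"
    unfolding some_elem_def by (rule someI)
  then show ?thesis using that mem_germ_of_arrow_iff[OF g] by (metis prod.collapse)
qed

lemma germ_groupoid_simps:
  "src bis_germ_groupoid A = snd (some_elem A)"
  "rng bis_germ_groupoid A = bis_char_act (fst (some_elem A)) (snd (some_elem A))"
  "comp bis_germ_groupoid A B = bis_germ (bis_mult G (fst (some_elem A)) (fst (some_elem B))) (snd (some_elem B))"
  "ginv bis_germ_groupoid A = bis_germ (bis_star G (fst (some_elem A))) (bis_char_act (fst (some_elem A)) (snd (some_elem A)))"
  "ident bis_germ_groupoid \<phi> = bis_germ (bis_one G) \<phi>"
  unfolding germ_groupoid_def Let_def some_elem_def by simp_all

lemma src_germ_of_arrow: "g \<in> arrs G \<Longrightarrow> src bis_germ_groupoid (germ_of_arrow g) = point_char (src G g)"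
  by (metis germ_groupoid_simps(1) some_elem_germ_of_arrow snd_conv)

lemma rng_germ_of_arrow:
  assumes g: "g \<in> arrs G"
  shows "rng bis_germ_groupoid (germ_of_arrow g) = point_char (rng G g)"
proof -
  obtain t where t: "some_elem (germ_of_arrow g) = (t, point_char (src G g))" "bisection G t" "g \<in> t"
    using some_elem_germ_of_arrow[OF g] .
  then show ?thesis
    using germ_groupoid_simps(2) char_act_point_char[OF t(2)] arrow_at_src[OF t(2,3)] by simp
qed

lemma ginv_germ_of_arrow:
  assumes g: "g \<in> arrs G"
  shows "ginv bis_germ_groupoid (germ_of_arrow g) = germ_of_arrow (ginv G g)"
proof -
  obtain t where t: "some_elem (germ_of_arrow g) = (t, point_char (src G g))" "bisection G t" "g \<in> t"
    using some_elem_germ_of_arrow[OF g] .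
  have "ginv bis_germ_groupoid (germ_of_arrow g) = bis_germ (bis_star G t) (point_char (rng G g))"
    using germ_groupoid_simps(4) t char_act_point_char[OF t(2)] arrow_at_src[OF t(2,3)] by simp
  also have "\<dots> = germ_of_arrow (ginv G g)"
    using germ_of_arrow_eq[OF bisection_bis_star[OF t(2)], of "ginv G g"] t g
    unfolding bis_star_def by simp
  finally show ?thesis .
qed

lemma comp_germ_of_arrow:
  assumes g: "g \<in> arrs G" and h: "h \<in> arrs G" and gh: "src G g = rng G h"
  shows "comp bis_germ_groupoid (germ_of_arrow g) (germ_of_arrow h) = germ_of_arrow (comp G g h)"
proof -
  obtain s where s: "some_elem (germ_of_arrow g) = (s, point_char (src G g))" "bisection G s" "g \<in> s"
    using some_elem_germ_of_arrow[OF g] .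
  obtain t where t: "some_elem (germ_of_arrow h) = (t, point_char (src G h))" "bisection G t" "h \<in> t"
    using some_elem_germ_of_arrow[OF h] .
  have "comp G g h \<in> bis_mult G s t" using s t gh unfolding mem_bis_mult by blast
  then have "germ_of_arrow (comp G g h) = bis_germ (bis_mult G s t) (point_char (src G h))"
    using germ_of_arrow_eq[OF bisection_bis_mult[OF s(2) t(2)]] g h gh by simp
  then show ?thesis using germ_groupoid_simps(3) s t by simp
qed

lemma ident_germ_groupoid_point_char:
  assumes x: "x \<in> objs G"
  shows "ident bis_germ_groupoid (point_char x) = germ_of_arrow (ident G x)"
proof -
  have "bisection G (bis_one G)" "ident G x \<in> bis_one G"
    using bisection_ident_image[OF openin_topspace] x unfolding bis_one_eq by auto
  then show ?thesis
    using germ_of_arrow_eq germ_groupoid_simps(5) x by simp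
qed

lemma openin_char_top_charU: "e \<in> BisE G \<Longrightarrow> openin bis_char_top (bis_charU e)"
  unfolding char_top_def by (rule topology_generated_by_Basis) blast

lemma topspace_char_top: "topspace bis_char_top = bis_characters"
  using bis_one_BisE unfolding char_top_def charU_def characters_def by auto

lemma continuous_map_point_char: "continuous_map (obj_top G) bis_char_top point_char"
  unfolding char_top_def
proof (rule continuous_on_generated_topo)
  fix U assume "U \<in> {bis_charU e | e. e \<in> BisE G}"
  then obtain V where V: "openin (obj_top G) V" "U = bis_charU (ident G ` V)"
    unfolding BisE_iff_ident_image by blast
  then have "point_char -` U \<inter> objs G = V"
    using point_char_ident_image[OF V(1)] point_char_in_characters openin_subset[OF V(1)]
    unfolding charU_def by auto
  then show "openin (obj_top G) (point_char -` U \<inter> objs G)" using V by simp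
next
  show "point_char ` objs G \<subseteq> \<Union> {bis_charU e | e. e \<in> BisE G}"
    using topspace_char_top point_char_in_characters unfolding char_top_def by auto
qed

abbreviation germ_basis :: "('a set \<times> ('a set \<Rightarrow> bool)) set set set" where
  "germ_basis \<equiv> {{bis_germ s \<phi> | \<phi>. \<phi> \<in> U} | s U. s \<in> Bis G \<and>
      openin bis_char_top U \<and> U \<subseteq> bis_charU (bis_mult G (bis_star G s) s)}"

definition germ_nbhd :: "'a set \<Rightarrow> ('a set \<times> ('a set \<Rightarrow> bool)) set set" where
  "germ_nbhd s = {bis_germ s \<phi> | \<phi>. \<phi> \<in> bis_charU (bis_mult G (bis_star G s) s)}"

lemma arr_top_germ_groupoid: "arr_top bis_germ_groupoid = topology_generated_by germ_basis"
  unfolding germ_groupoid_def Let_def by simp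

lemma bis_germ_refl:
  assumes "s \<in> Bis G" "\<phi> \<in> bis_charU (bis_mult G (bis_star G s) s)"
  shows "(s, \<phi>) \<in> bis_germ s \<phi>"
proof -
  have "\<phi> (bis_one G)" using assms(2) unfolding charU_def characters_def by blast
  then show ?thesis
    using assms bis_one_BisE unfolding germ_def germ_rel_def germ_pairs_def by blast
qed

lemma germ_of_arrow_mem_basic_iff:
  assumes g: "g \<in> arrs G" and s: "s \<in> Bis G" and U: "U \<subseteq> bis_charU (bis_mult G (bis_star G s) s)"
  shows "germ_of_arrow g \<in> {bis_germ s \<phi> | \<phi>. \<phi> \<in> U} \<longleftrightarrow> g \<in> s \<and> point_char (src G g) \<in> U"
proof
  assume "germ_of_arrow g \<in> {bis_germ s \<phi> | \<phi>. \<phi> \<in> U}"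
  then obtain \<phi> where \<phi>: "\<phi> \<in> U" "germ_of_arrow g = bis_germ s \<phi>" by blast
  have "(s, \<phi>) \<in> bis_germ s \<phi>"
    using bis_germ_refl s \<phi>(1) U by blast
  then show "g \<in> s \<and> point_char (src G g) \<in> U"
    using \<phi> mem_germ_of_arrow_iff[OF g] by auto
next
  assume "g \<in> s \<and> point_char (src G g) \<in> U"
  then show "germ_of_arrow g \<in> {bis_germ s \<phi> | \<phi>. \<phi> \<in> U}"
    using germ_of_arrow_eq s unfolding Bis_def by blast
qed

lemma germ_of_arrow_image_bisection:
  assumes s: "bisection G s"
  shows "germ_of_arrow ` s
       = germ_nbhd s \<inter> germ_of_arrow ` arrs G"
proof -
  have "point_char (src G g) \<in> bis_charU (bis_mult G (bis_star G s) s)" if "g \<in> s" for g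
    using point_char_in_charU_iff[OF s] bisection_imp_arr[OF s] src_in_objs that by blast
  then show ?thesis
    using germ_of_arrow_mem_basic_iff[OF _ _ order_refl] s bisection_imp_arr[OF s]
    unfolding Bis_def germ_nbhd_def by blast
qed

lemma germ_basis_bisection:
  "bisection G s \<Longrightarrow> germ_nbhd s \<in> germ_basis"
  using openin_char_top_charU bis_star_mult_self_BisE unfolding Bis_def germ_nbhd_def by blast

lemma germs_of_arrows_subset: "germ_of_arrow ` arrs G \<subseteq> \<Union>germ_basis"
proof
  fix A assume "A \<in> germ_of_arrow ` arrs G"
  then obtain g where g: "g \<in> arrs G" "A = germ_of_arrow g" by blast
  then have "A \<in> germ_of_arrow ` bisection_through g" using bisection_through(2) by blast
  then have "A \<in> germ_nbhd (bisection_through g)"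
    using germ_of_arrow_image_bisection[OF bisection_through(1)[OF g(1)]] by blast
  then show "A \<in> \<Union>germ_basis"
    using germ_basis_bisection[OF bisection_through(1)[OF g(1)]] by blast
qed

lemma restricted_germ_arrows:
  "{A \<in> arrs bis_germ_groupoid. src bis_germ_groupoid A \<in> point_char ` objs G} = germ_of_arrow ` arrs G"
proof (intro equalityI subsetI)
  fix A assume A: "A \<in> {A \<in> arrs bis_germ_groupoid. src bis_germ_groupoid A \<in> point_char ` objs G}"
  then obtain s U \<phi> where sU: "s \<in> Bis G" "U \<subseteq> bis_charU (bis_mult G (bis_star G s) s)" "\<phi> \<in> U"
      "A = bis_germ s \<phi>"
    unfolding arr_top_germ_groupoid by auto
  have "(s, \<phi>) \<in> A"
    using bis_germ_refl sU by blast
  then have "some_elem A \<in> A" unfolding some_elem_def by (rule someI)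
  then have "src bis_germ_groupoid A = \<phi>"
    using sU(4) germ_groupoid_simps(1) mem_germ_snd by (metis prod.collapse)
  then obtain x where x: "x \<in> objs G" "\<phi> = point_char x" using A by auto
  have s: "bisection G s" using sU(1) unfolding Bis_def by simp
  then have "x \<in> src G ` s" using sU x point_char_in_charU_iff by blast
  then have "arrow_at s x \<in> s" "src G (arrow_at s x) = x" using arrow_at_in[OF s] by auto
  then have "A = germ_of_arrow (arrow_at s x)" using germ_of_arrow_eq[OF s] sU(4) x by simp
  then show "A \<in> germ_of_arrow ` arrs G"
    using bisection_imp_arr[OF s \<open>arrow_at s x \<in> s\<close>] by blast
next
  fix A assume A: "A \<in> germ_of_arrow ` arrs G"
  then have "A \<in> arrs bis_germ_groupoid"
    using subsetD[OF germs_of_arrows_subset] unfolding arr_top_germ_groupoid by simp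
  moreover have "src bis_germ_groupoid A \<in> point_char ` objs G"
    using A src_germ_of_arrow src_in_objs by auto
  ultimately show "A \<in> {A \<in> arrs bis_germ_groupoid. src bis_germ_groupoid A \<in> point_char ` objs G}"
    by blast
qed

abbreviation germs_of_arrows_top :: "('a set \<times> ('a set \<Rightarrow> bool)) set topology" where
  "germs_of_arrows_top \<equiv> subtopology (topology_generated_by germ_basis) (germ_of_arrow ` arrs G)"

lemma continuous_map_germ_of_arrow: "continuous_map (arr_top G) germs_of_arrows_top germ_of_arrow"
  unfolding continuous_map_in_subtopology
proof
  show "continuous_map (arr_top G) (topology_generated_by germ_basis) germ_of_arrow"
  proof (rule continuous_on_generated_topo)
    fix N assume "N \<in> germ_basis"
    then obtain s U where sU: "N = {bis_germ s \<phi> | \<phi>. \<phi> \<in> U}" "s \<in> Bis G" "openin bis_char_top U"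
        "U \<subseteq> bis_charU (bis_mult G (bis_star G s) s)"
      by blast
    have "germ_of_arrow -` N \<inter> arrs G = s \<inter> {g \<in> arrs G. point_char (src G g) \<in> U}"
    proof (intro equalityI subsetI)
      fix g assume "g \<in> germ_of_arrow -` N \<inter> arrs G"
      then have g: "g \<in> arrs G" "germ_of_arrow g \<in> N" by auto
      then show "g \<in> s \<inter> {g \<in> arrs G. point_char (src G g) \<in> U}"
        using germ_of_arrow_mem_basic_iff[OF g(1) sU(2,4)] unfolding sU(1) by simp
    next
      fix g assume "g \<in> s \<inter> {g \<in> arrs G. point_char (src G g) \<in> U}"
      then have g: "g \<in> arrs G" "g \<in> s" "point_char (src G g) \<in> U" by auto
      then have "germ_of_arrow g \<in> N"
        using germ_of_arrow_mem_basic_iff[OF g(1) sU(2,4)] unfolding sU(1) by simp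
      then show "g \<in> germ_of_arrow -` N \<inter> arrs G" using g(1) by simp
    qed    moreover have "openin (arr_top G) (s \<inter> {g \<in> arrs G. point_char (src G g) \<in> U})"
      using sU(2) bisection_openin openin_continuous_map_preimage[OF
          continuous_map_compose[OF continuous_map_src continuous_map_point_char] sU(3)]
      unfolding Bis_def by (auto simp: o_def)
    ultimately show "openin (arr_top G) (germ_of_arrow -` N \<inter> arrs G)" by simp
  qed (use germs_of_arrows_subset in blast)
qed auto

lemma openin_germ_of_arrow_image:
  assumes W: "openin (arr_top G) W"
  shows "openin germs_of_arrows_top (germ_of_arrow ` W)"
proof -
  have "g \<in> bisection_through g" if "g \<in> W" for g
    using that W openin_subset bisection_through(2) by blast
  then have "germ_of_arrow ` W = (\<Union>g\<in>W. germ_of_arrow ` (bisection_through g \<inter> W))"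
    by blast
  moreover have "openin germs_of_arrows_top (germ_of_arrow ` (bisection_through g \<inter> W))" if "g \<in> W" for g
  proof -
    have "g \<in> arrs G" using that W openin_subset by blast
    then have B: "bisection G (bisection_through g \<inter> W)"
      using W bisection_through(1) bisection_openin bisection_openin_subset by (meson Int_lower1 openin_Int)
    have "openin germs_of_arrows_top (germ_nbhd (bisection_through g \<inter> W) \<inter> germ_of_arrow ` arrs G)"
      by (rule openin_subtopology_Int[OF topology_generated_by_Basis[OF germ_basis_bisection[OF B]]])
    then show ?thesis
      using germ_of_arrow_image_bisection[OF B] by simp
  qed
  ultimately show ?thesis by auto
qed


lemma obj_top_restrict_germ_groupoid:
  "obj_top (restrict_gpd bis_germ_groupoid (point_char ` objs G))
     = subtopology bis_char_top (point_char ` objs G)"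
  unfolding restrict_gpd_simps germ_groupoid_def Let_def by simp

lemma arr_top_restrict_germ_groupoid:
  "arr_top (restrict_gpd bis_germ_groupoid (point_char ` objs G)) = germs_of_arrows_top"
  unfolding restrict_gpd_simps(2) restricted_germ_arrows by (simp only: arr_top_germ_groupoid)

lemma arrs_restrict_germ_groupoid:
  "arrs (restrict_gpd bis_germ_groupoid (point_char ` objs G)) = germ_of_arrow ` arrs G"
  unfolding restrict_gpd_simps topspace_subtopology restricted_germ_arrows[symmetric] by blast
end

section \<open>The sober case\<close>

locale sober_etale_groupoid = etale_groupoid +
  assumes sober: "sober (obj_top G)"
begin

lemma irreducible_idem_iff_point:
  "irreducible_idem G e \<longleftrightarrow> (\<exists>x\<in>objs G. e = ident G ` (objs G - obj_top G closure_of {x}))"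
  unfolding irreducible_idem_iff_meet_irreducible_open sober_meet_irreducible_open_iff[OF sober]
  by blast

lemma phi_irr_in_characters:
  "irreducible_idem G e \<Longrightarrow> phi_irr G e \<in> bis_characters"
  using irreducible_idem_iff_point phi_irr_ident_compl_closure_of point_char_in_characters by auto

lemma phi_irr_irreducible_eq: "{phi_irr G e | e. irreducible_idem G e} = point_char ` objs G"
proof (intro equalityI subsetI)
  fix \<phi> assume "\<phi> \<in> {phi_irr G e | e. irreducible_idem G e}"
  then show "\<phi> \<in> point_char ` objs G"
    using irreducible_idem_iff_point phi_irr_ident_compl_closure_of by auto
next
  fix \<phi> assume "\<phi> \<in> point_char ` objs G"
  then obtain x where "x \<in> objs G" "\<phi> = point_char x" by blast
  then have "\<phi> = phi_irr G (ident G ` (objs G - obj_top G closure_of {x}))"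
    "irreducible_idem G (ident G ` (objs G - obj_top G closure_of {x}))"
    using irreducible_idem_iff_point phi_irr_ident_compl_closure_of by auto
  then show "\<phi> \<in> {phi_irr G e | e. irreducible_idem G e}" by blast
qed

lemma inj_on_point_char: "inj_on point_char (objs G)"
proof (rule inj_onI)
  fix x y assume xy: "x \<in> objs G" "y \<in> objs G" "point_char x = point_char y"
  then have "x \<in> W \<longleftrightarrow> y \<in> W" if "openin (obj_top G) W" for W
    using point_char_ident_image[OF that] by metis
  then show "x = y"
    using xy sober_imp_t0_space[OF sober] unfolding t0_space_def by blast
qed

lemma inj_on_germ_of_arrow: "inj_on germ_of_arrow (arrs G)"
proof (rule inj_onI)
  fix g h assume g: "g \<in> arrs G" and h: "h \<in> arrs G" and gh: "germ_of_arrow g = germ_of_arrow h"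
  then have "(bisection_through g, point_char (src G g)) \<in> germ_of_arrow h"
    using mem_germ_of_arrow_iff[OF g] bisection_through[OF g] by blast
  then have "src G g = src G h" "h \<in> bisection_through g"
    using mem_germ_of_arrow_iff[OF h] inj_onD[OF inj_on_point_char] src_in_objs g h by auto
  then show "g = h"
    using bisection_through[OF g] bisection_iff_open_inj by (metis inj_onD)
qed

lemma homeomorphic_map_point_char:
  "homeomorphic_map (obj_top G) (subtopology bis_char_top (point_char ` objs G)) point_char"
proof (rule bijective_open_imp_homeomorphic_map)
  show "continuous_map (obj_top G) (subtopology bis_char_top (point_char ` objs G)) point_char"
    using continuous_map_point_char by (auto simp: continuous_map_in_subtopology)
  show "open_map (obj_top G) (subtopology bis_char_top (point_char ` objs G)) point_char"
    unfolding open_map_def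
  proof (intro allI impI)
    fix W assume W: "openin (obj_top G) W"
    then have "point_char ` W = bis_charU (ident G ` W) \<inter> point_char ` objs G"
      using point_char_ident_image[OF W] point_char_in_characters openin_subset[OF W]
      unfolding charU_def by auto
    moreover have "openin bis_char_top (bis_charU (ident G ` W))"
      using openin_char_top_charU W BisE_iff_ident_image by blast
    ultimately show "openin (subtopology bis_char_top (point_char ` objs G)) (point_char ` W)"
      by (simp add: openin_subtopology_Int)
  qed
  show "point_char ` objs G = topspace (subtopology bis_char_top (point_char ` objs G))"
    using topspace_char_top point_char_in_characters by auto
qed (rule inj_on_point_char)

lemma homeomorphic_map_germ_of_arrow:
  "homeomorphic_map (arr_top G) germs_of_arrows_top germ_of_arrow"
proof (rule bijective_open_imp_homeomorphic_map)
  show "open_map (arr_top G) germs_of_arrows_top germ_of_arrow"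
    unfolding open_map_def using openin_germ_of_arrow_image by blast
  show "germ_of_arrow ` arrs G = topspace germs_of_arrows_top"
    using germs_of_arrows_subset by auto
qed (simp_all add: continuous_map_germ_of_arrow inj_on_germ_of_arrow)

lemma gpd_iso_restrict_germ_groupoid: "gpd_iso (restrict_gpd bis_germ_groupoid (point_char ` objs G)) G"
proof -
  let ?R = "restrict_gpd bis_germ_groupoid (point_char ` objs G)"
  let ?fo = "inv_into (objs G) point_char" and ?fa = "inv_into (arrs G) germ_of_arrow"
  have fo: "?fo (point_char x) = x" if "x \<in> objs G" for x
    using inv_into_f_f[OF inj_on_point_char that] .
  have fa: "?fa (germ_of_arrow g) = g" if "g \<in> arrs G" for g
    using inv_into_f_f[OF inj_on_germ_of_arrow that] .
  have "homeomorphic_map (obj_top ?R) (obj_top G) ?fo"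
    using homeomorphic_map_inv_into[OF homeomorphic_map_point_char]
    unfolding obj_top_restrict_germ_groupoid by simp
  moreover have "homeomorphic_map (arr_top ?R) (arr_top G) ?fa"
    using homeomorphic_map_inv_into[OF homeomorphic_map_germ_of_arrow]
    unfolding arr_top_restrict_germ_groupoid by simp
  moreover have "src G (?fa A) = ?fo (src ?R A) \<and> rng G (?fa A) = ?fo (rng ?R A) \<and>
      ginv G (?fa A) = ?fa (ginv ?R A)" if A: "A \<in> arrs ?R" for A
  proof -
    obtain g where g: "g \<in> arrs G" "A = germ_of_arrow g" using A unfolding arrs_restrict_germ_groupoid by blast
    then show ?thesis
      using fo fa src_germ_of_arrow rng_germ_of_arrow ginv_germ_of_arrow src_in_objs rng_in_objs
        ginv_in_arrs unfolding restrict_gpd_simps by simp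
  qed
  moreover have "ident G (?fo \<phi>) = ?fa (ident ?R \<phi>)" if \<phi>: "\<phi> \<in> objs ?R" for \<phi>
  proof -
    obtain x where "x \<in> objs G" "\<phi> = point_char x"
      using \<phi> unfolding restrict_gpd_simps by auto
    then show ?thesis
      using fo fa ident_germ_groupoid_point_char ident_in_arrs unfolding restrict_gpd_simps by simp
  qed
  moreover have "comp G (?fa A) (?fa B) = ?fa (comp ?R A B)" if AB: "(A, B) \<in> composable ?R" for A B
  proof -
    obtain g h where gh: "g \<in> arrs G" "A = germ_of_arrow g" "h \<in> arrs G" "B = germ_of_arrow h"
      using AB unfolding composable_def arrs_restrict_germ_groupoid by blast
    moreover have "src G g = rng G h"
      using AB gh inj_onD[OF inj_on_point_char] src_in_objs rng_in_objs src_germ_of_arrow rng_germ_of_arrow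
      unfolding composable_def restrict_gpd_simps by auto
    ultimately show ?thesis
      using fa comp_germ_of_arrow comp_in_arrs unfolding restrict_gpd_simps by simp
  qed
  ultimately show ?thesis unfolding gpd_iso_def by blast
qed

end

theorem proposition5p4:
  fixes G :: "('o, 'a) tgpd"
  assumes "etale G"
    and "sober (obj_top G)"
  defines "X \<equiv> {phi_irr G e | e. irreducible_idem G e}"
  shows "(\<forall>e. irreducible_idem G e \<longrightarrow>
            phi_irr G e \<in> characters (Bis G) (bis_mult G) (bis_one G) bis_zero)
       \<and> S_invariant (Bis G) (bis_mult G) (bis_star G) (bis_one G) bis_zero X
       \<and> gpd_iso (restrict_gpd (germ_groupoid (Bis G) (bis_mult G) (bis_star G) (bis_one G) bis_zero) X) G"
proof -
  interpret sober_etale_groupoid G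
    using assms(1,2) by unfold_locales
  have X: "X = point_char ` objs G"
    unfolding X_def by (rule phi_irr_irreducible_eq)
  show ?thesis
    unfolding X using phi_irr_in_characters S_invariant_point_chars gpd_iso_restrict_germ_groupoid
    by blast
qed

end
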